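(* Let $\mathcal{A}$ be Suslin, let $\Phi\colon\mathcal{A}\to\mathbb{R}$ be measurable and semibounded, let $\Psi\colon\mathcal{A}\to\mathbb{R}^n$ be measurable, let $Z\subseteq\mathbb{R}^n$ and $\Pi(Z):=\{\pi\in\mathcal{M}(\mathcal{A}):\mathbb{E}_\pi[\Psi]\in Z\}$. Let $\mathcal{D}$ be a metrizable Suslin space, $\mathbb{D}\colon\mathcal{A}\to\mathcal{M}(\mathcal{D})$ measurable and $B\subseteq\mathcal{D}$ open. Then $\mathcal{U}(\Pi(Z)\,|\,B)$ equals the supremum over $\alpha_0,\dots,\alpha_n\ge0$, $q\in Z$ and $\mu_0,\dots,\mu_n\in\mathcal{A}$ of $\sum_{i=0}^n\alpha_i\Phi(\mu_i)\mathbb{D}(\mu_i)[B]$ subject to the constraints $\sum_{i=0}^n\alpha_i(\Psi(\mu_i)-q)=0$ and $\sum_{i=0}^n\alpha_i\mathbb{D}(\mu_i)[B]=1$.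
   Context: $\mathcal{M}(\mathcal{Y})$: Borel probability measures. Posterior: for $\Pi\subseteq\mathcal{M}(\mathcal{A})$, $\Pi_B:=\{\pi\in\Pi:\mathbb{E}_{\mu\sim\pi}[\mathbb{D}(\mu)[B]]>0\}$, $\mathbb{E}_{\pi\odot\mathbb{D}}[\Phi|B]:=\mathbb{E}_{\mu\sim\pi}[\Phi(\mu)\mathbb{D}(\mu)[B]]/\mathbb{E}_{\mu\sim\pi}[\mathbb{D}(\mu)[B]]$, and $\mathcal{U}(\Pi|B):=\sup_{\pi\in\Pi_B}\mathbb{E}_{\pi\odot\mathbb{D}}[\Phi|B]$; suprema over empty sets are $-\infty$. Implicit in $\mathbb{E}_\pi[\Psi]\in Z$ is that the integral exists. *)

theory Defs
  imports "HOL-Probability.Probability"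
begin

text \<open>It is the value of the integral whenever the integral exists in the extended reals
  (at least one of the two parts finite), as is the case for semibounded integrands
  w.r.t. probability measures.\<close>
definition ext_integral :: "'a measure \<Rightarrow> ('a \<Rightarrow> real) \<Rightarrow> ereal" where
  "ext_integral M f =
     enn2ereal (\<integral>\<^sup>+ x. ennreal (f x) \<partial>M) - enn2ereal (\<integral>\<^sup>+ x. ennreal (- f x) \<partial>M)"

definition PiZ :: "('a::topological_space \<Rightarrow> 'v::{banach,second_countable_topology}) \<Rightarrow> 'v set
    \<Rightarrow> 'a measure set" where
  "PiZ Psi Z = {p. p \<in> space (prob_algebra borel) \<and> integrable p Psi \<and> (\<integral>x. Psi x \<partial>p) \<in> Z}"

definition Pi_cond :: "'a measure set \<Rightarrow> ('a \<Rightarrow> 'd measure) \<Rightarrow> 'd set \<Rightarrow> 'a measure set" where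
  "Pi_cond Prs D B = {p \<in> Prs. (\<integral>mu. measure (D mu) B \<partial>p) > 0}"

definition post_exp :: "'a measure \<Rightarrow> ('a \<Rightarrow> 'd measure) \<Rightarrow> ('a \<Rightarrow> real) \<Rightarrow> 'd set \<Rightarrow> ereal" where
  "post_exp p D Phi B =
     ext_integral p (\<lambda>mu. Phi mu * measure (D mu) B) / ereal (\<integral>mu. measure (D mu) B \<partial>p)"

text \<open>U(Pi | B) = sup over Pi_B of the posterior expectation (sup of empty set = -infinity).\<close>
definition U_post :: "'a measure set \<Rightarrow> ('a \<Rightarrow> 'd measure) \<Rightarrow> ('a \<Rightarrow> real) \<Rightarrow> 'd set \<Rightarrow> ereal" where
  "U_post Prs D Phi B = (SUP p \<in> Pi_cond Prs D B. post_exp p D Phi B)"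

end

(*
  For p in Pi(Z) with positive evidence write w(mu) = D(mu)[B] and let k be an integrable
  minorant of Phi w.  The mean of (Psi - E_p Psi, w, k) under p lies in the convex hull of its
  range, so (0, 1, E_p k / E_p w) is a nonnegative combination of finitely many points
  (Psi(mu) - q, w(mu), k(mu)).  Only n + 1 linear constraints are involved, hence a basic-solution
  argument keeps n + 1 atoms without lowering the objective, and replacing k by Phi w only raises
  it.  Semiboundedness of Phi makes the posterior numerator a supremum of such minorants
  (truncations of Phi w), which gives the upper bound.  Conversely every feasible
  (alpha, q, mu) is realised by the normalised mixture of Dirac masses at the mu_i, whose
  posterior expectation is exactly the sum in the statement.
*)

theory Submission
  imports Defs
begin

section \<open>Extended integrals of semibounded functions\<close>

lemma ext_integral_eq_integral:
  fixes f :: "'a \<Rightarrow> real"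
  assumes f: "integrable M f"
  shows "ext_integral M f = ereal (integral\<^sup>L M f)"
proof -
  have pos: "integrable M (\<lambda>x. max 0 (f x))" and neg: "integrable M (\<lambda>x. max 0 (- f x))"
    using f by auto
  have "(\<lambda>x. max 0 (f x) - max 0 (- f x)) = f" by (auto simp: fun_eq_iff max_def)
  then have "integral\<^sup>L M f = (\<integral>x. max 0 (f x) \<partial>M) - (\<integral>x. max 0 (- f x) \<partial>M)"
    using Bochner_Integration.integral_diff[OF pos neg] by simp
  then show ?thesis
    unfolding ext_integral_def
    using nn_integral_eq_integral[OF pos] nn_integral_eq_integral[OF neg]
    by (simp add: integral_nonneg_AE)
qed

lemma (in finite_measure) nn_integral_bounded_above_finite:
  assumes "\<And>x. f x \<le> K"
  shows "(\<integral>\<^sup>+ x. ennreal (f x) \<partial>M) \<noteq> \<infinity>"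
proof -
  have "(\<integral>\<^sup>+ x. ennreal (f x) \<partial>M) \<le> (\<integral>\<^sup>+ x. ennreal K \<partial>M)"
    by (intro nn_integral_mono ennreal_leI assms)
  also have "\<dots> < \<infinity>"
    using emeasure_finite[of "space M"] by (simp add: ennreal_mult_eq_top_iff less_top[symmetric])
  finally show ?thesis by simp
qed

lemma ext_integral_eq_minf:
  fixes f :: "'a \<Rightarrow> real"
  assumes f: "f \<in> borel_measurable M" "\<not> integrable M f"
    and pos_finite: "(\<integral>\<^sup>+ x. ennreal (f x) \<partial>M) \<noteq> \<infinity>"
  shows "ext_integral M f = - \<infinity>"
proof -
  have "(\<integral>\<^sup>+ x. ennreal (f x) \<partial>M) + (\<integral>\<^sup>+ x. ennreal (- f x) \<partial>M) = (\<integral>\<^sup>+ x. ennreal \<bar>f x\<bar> \<partial>M)"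
    using f(1) by (subst nn_integral_add[symmetric]) (auto intro!: nn_integral_cong simp: ennreal_neg abs_real_def)
  also have "\<dots> = \<infinity>"
    using f unfolding integrable_iff_bounded by (simp add: less_top[symmetric])
  finally have "(\<integral>\<^sup>+ x. ennreal (- f x) \<partial>M) = \<infinity>"
    using pos_finite by simp
  with pos_finite show ?thesis
    unfolding ext_integral_def by (cases "\<integral>\<^sup>+ x. ennreal (f x) \<partial>M" rule: ennreal_cases) auto
qed

lemma enn2ereal_SUP:
  assumes "I \<noteq> {}"
  shows "enn2ereal (SUP i\<in>I. g i) = (SUP i\<in>I. enn2ereal (g i))"
proof -
  obtain i where "i \<in> I" using assms by blast
  then have "0 \<le> (SUP i\<in>I. enn2ereal (g i))" by (intro SUP_upper2[of i]) auto
  then show ?thesis by (simp add: Sup_ennreal.rep_eq image_comp sup.absorb2)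
qed

lemma ext_integral_eq_SUP_min:
  fixes f :: "'a \<Rightarrow> real"
  assumes f: "f \<in> borel_measurable M" and neg_finite: "(\<integral>\<^sup>+ x. ennreal (- f x) \<partial>M) \<noteq> \<infinity>"
  shows "ext_integral M f = (SUP N::nat. ext_integral M (\<lambda>x. min (f x) (real N)))"
proof -
  define neg where "neg = (\<integral>\<^sup>+ x. ennreal (- f x) \<partial>M)"
  have "ennreal (- min (f x) (real N)) = ennreal (- f x)" for x N
    by (cases "f x \<ge> 0") (auto simp: ennreal_neg)
  then have neg_min: "(\<integral>\<^sup>+ x. ennreal (- min (f x) (real N)) \<partial>M) = neg" for N
    by (simp add: neg_def)
  have "ennreal (f x) = (SUP N. ennreal (min (f x) (real N)))" for x
  proof (rule antisym)
    obtain N where "f x \<le> real N" using real_arch_simple by blast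
    then show "ennreal (f x) \<le> (SUP N. ennreal (min (f x) (real N)))"
      by (intro SUP_upper2[of N]) auto
  qed (auto intro!: SUP_least ennreal_leI)
  then have "(\<integral>\<^sup>+ x. ennreal (f x) \<partial>M) = (\<integral>\<^sup>+ x. (SUP N. ennreal (min (f x) (real N))) \<partial>M)"
    by simp
  also have "\<dots> = (SUP N. \<integral>\<^sup>+ x. ennreal (min (f x) (real N)) \<partial>M)"
    using f by (intro nn_integral_monotone_convergence_SUP)
      (auto simp: incseq_def le_fun_def intro!: ennreal_leI)
  finally have pos_SUP: "(\<integral>\<^sup>+ x. ennreal (f x) \<partial>M) = \<dots>" .
  show ?thesis
    unfolding ext_integral_def pos_SUP neg_min neg_def[symmetric] enn2ereal_SUP[OF UNIV_not_empty]
    using neg_finite by (intro SUP_ereal_minus_left[symmetric]) (auto simp: neg_def)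
qed

lemma (in finite_measure) ext_integral_le_SUP_integrable_minorants:
  fixes f :: "'a \<Rightarrow> real"
  assumes f: "f \<in> borel_measurable M"
    and semibounded: "bdd_above (range f) \<or> bdd_below (range f)"
  shows "ext_integral M f \<le> (SUP k \<in> {k. integrable M k \<and> (\<forall>x. k x \<le> f x)}. ereal (integral\<^sup>L M k))"
    (is "_ \<le> ?S")
proof -
  have minorant: "ereal (integral\<^sup>L M k) \<le> ?S" if "integrable M k" "\<forall>x. k x \<le> f x" for k
    by (rule SUP_upper) (use that in auto)
  from semibounded show ?thesis
  proof
    assume "bdd_above (range f)"
    then obtain K where K: "\<And>x. f x \<le> K" by (auto simp: bdd_above_def)
    show ?thesis
    proof (cases "integrable M f")
      case True
      then show ?thesis using minorant[of f] by (simp add: ext_integral_eq_integral)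
    next
      case False
      then show ?thesis
        using ext_integral_eq_minf[OF f False nn_integral_bounded_above_finite[OF K]] by simp
    qed
  next
    assume "bdd_below (range f)"
    then obtain a where a: "\<And>x. a \<le> f x" by (auto simp: bdd_below_def)
    have "ext_integral M f = (SUP N::nat. ext_integral M (\<lambda>x. min (f x) (real N)))"
      using nn_integral_bounded_above_finite[of "\<lambda>x. - f x" "- a"] a
      by (intro ext_integral_eq_SUP_min f) auto
    also have "\<dots> \<le> ?S"
    proof (rule SUP_least)
      fix N :: nat
      have "integrable M (\<lambda>x. min (f x) (real N))"
      proof (rule integrable_const_bound[where B="\<bar>a\<bar> + real N"])
        show "AE x in M. norm (min (f x) (real N)) \<le> \<bar>a\<bar> + real N"
          using a by (intro AE_I2) (smt (verit) of_nat_0_le_iff real_norm_def)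
      qed (use f in simp)
      then show "ext_integral M (\<lambda>x. min (f x) (real N)) \<le> ?S"
        using minorant by (simp add: ext_integral_eq_integral)
    qed
    finally show ?thesis .
  qed
qed

section \<open>Means lie in convex hulls\<close>

lemma (in prob_space) integral_in_closure_convex_hull:
  fixes X :: "'a \<Rightarrow> 'b::euclidean_space"
  assumes X: "integrable M X" and R: "AE x in M. X x \<in> R"
  shows "integral\<^sup>L M X \<in> closure (convex hull R)"
proof (rule ccontr)
  let ?C = "closure (convex hull R)"
  assume y_notin: "integral\<^sup>L M X \<notin> ?C"
  obtain a b where ab: "inner a (integral\<^sup>L M X) < b" "\<forall>z\<in>?C. b < inner a z"
    using separating_hyperplane_closed_point[OF convex_closure[OF convex_convex_hull] closed_closure y_notin]
    by blast
  have R_C: "R \<subseteq> ?C" by (rule order_trans[OF hull_subset closure_subset])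
  have "AE x in M. b \<le> inner a (X x)"
    using R by eventually_elim (use ab(2) R_C in \<open>auto intro: less_imp_le\<close>)
  then have "b \<le> (\<integral>x. inner a (X x) \<partial>M)"
    by (intro integral_ge_const) (use X in auto)
  with ab(1) X show False by simp
qed

lemma aff_dim_Int_hyperplane_less:
  fixes R :: "'b::euclidean_space set"
  assumes "z \<in> convex hull R" "inner a z \<noteq> b"
  shows "aff_dim (R \<inter> {x. inner a x = b}) < aff_dim R"
proof (rule aff_dim_psubset)
  let ?H = "{x. inner a x = b}"
  have "affine hull (R \<inter> ?H) \<noteq> affine hull R"
  proof
    assume eq: "affine hull (R \<inter> ?H) = affine hull R"
    have "affine hull (R \<inter> ?H) \<subseteq> ?H"
      by (intro hull_minimal affine_hyperplane) auto
    then have "convex hull R \<subseteq> ?H"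
      using eq convex_hull_subset_affine_hull[of R] by blast
    with assms show False by blast
  qed
  moreover have "affine hull (R \<inter> ?H) \<subseteq> affine hull R" by (rule hull_mono) blast
  ultimately show "affine hull (R \<inter> ?H) \<subset> affine hull R" by blast
qed

lemma (in prob_space) integral_in_convex_hull:
  fixes X :: "'a \<Rightarrow> 'b::euclidean_space"
  assumes X: "integrable M X" and "AE x in M. X x \<in> R"
  shows "integral\<^sup>L M X \<in> convex hull R"
  using assms(2)
proof (induction "nat (aff_dim R + 1)" arbitrary: R rule: less_induct)
  case less
  let ?y = "integral\<^sup>L M X" and ?C = "convex hull R"
  show ?case
  proof (rule ccontr)
    assume y_notin: "?y \<notin> ?C"
    have y_closure: "?y \<in> closure ?C" by (rule integral_in_closure_convex_hull[OF X less.prems])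
    have y_boundary: "?y \<notin> rel_interior ?C" using y_notin rel_interior_subset by blast
    obtain a where "a \<noteq> 0" and
      supp: "\<And>z. z \<in> closure ?C \<Longrightarrow> inner a ?y \<le> inner a z" and
      strict: "\<And>z. z \<in> rel_interior ?C \<Longrightarrow> inner a ?y < inner a z"
      using supporting_hyperplane_relative_frontier[OF convex_convex_hull y_closure y_boundary]
      by blast
    let ?H = "{z. inner a z = inner a ?y}"
    have R_C: "R \<subseteq> closure ?C" by (rule order_trans[OF hull_subset closure_subset])
    text \<open>The linear functional attains its minimum over the support at the mean, so
      the distribution is concentrated on the supporting hyperplane.\<close>
    have "AE x in M. X x \<in> R \<inter> ?H"
    proof -
      have nonneg: "AE x in M. 0 \<le> inner a (X x) - inner a ?y"
        using less.prems by eventually_elim (use supp R_C in auto)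
      have "integrable M (\<lambda>x. inner a (X x) - inner a ?y)" using X by auto
      moreover have "(\<integral>x. inner a (X x) - inner a ?y \<partial>M) = 0" using X prob_space by simp
      ultimately have "AE x in M. inner a (X x) - inner a ?y = 0"
        using integral_nonneg_eq_0_iff_AE nonneg by blast
      with less.prems show ?thesis by eventually_elim auto
    qed
    moreover have "R \<noteq> {}" using less.prems AE_False by auto
    then obtain z where z: "z \<in> rel_interior ?C"
      using rel_interior_eq_empty[of ?C] by auto
    have "aff_dim (R \<inter> ?H) < aff_dim R"
      using z rel_interior_subset strict[OF z] by (intro aff_dim_Int_hyperplane_less[of z]) auto
    then have "nat (aff_dim (R \<inter> ?H) + 1) < nat (aff_dim R + 1)"
      using aff_dim_geq[of "R \<inter> ?H"] by linarith
    ultimately have "?y \<in> convex hull (R \<inter> ?H)" using less.hyps by blast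
    with y_notin show False using hull_mono[of "R \<inter> ?H" R] by blast
  qed
qed

lemma (in prob_space) integral_eq_finite_convex_combination:
  fixes X :: "'a \<Rightarrow> 'b::euclidean_space"
  assumes "integrable M X"
  obtains T u where "finite T" "\<forall>x\<in>T. 0 \<le> u x" "sum u T = 1"
    "(\<Sum>x\<in>T. u x *\<^sub>R X x) = integral\<^sup>L M X"
proof -
  have "integral\<^sup>L M X \<in> convex hull (range X)"
    by (rule integral_in_convex_hull[OF assms]) simp
  then obtain S v where S: "finite S" "S \<subseteq> range X" "\<forall>y\<in>S. 0 \<le> v y" "sum v S = 1"
    "(\<Sum>y\<in>S. v y *\<^sub>R y) = integral\<^sup>L M X"
    unfolding convex_hull_explicit by blast
  let ?g = "inv_into UNIV X"
  have inj: "inj_on ?g S" using S(2) by (rule inj_on_inv_into)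
  have X_g: "X (?g y) = y" if "y \<in> S" for y using S(2) that by (auto intro: f_inv_into_f)
  show ?thesis
  proof (rule that[of "?g ` S" "v \<circ> X"])
    show "sum (v \<circ> X) (?g ` S) = 1" "(\<Sum>x\<in>?g ` S. (v \<circ> X) x *\<^sub>R X x) = integral\<^sup>L M X"
      using S(4,5) by (simp_all add: sum.reindex[OF inj] X_g cong: sum.cong)
  qed (use S X_g in auto)
qed

section \<open>Carath\'eodory reduction with an objective\<close>

lemma obtain_linear_relation:
  fixes G :: "'a \<Rightarrow> 'v::euclidean_space"
  assumes T: "finite T" and card: "DIM('v) < card T"
  obtains \<gamma> where "\<exists>x\<in>T. \<gamma> x \<noteq> 0" "(\<Sum>x\<in>T. \<gamma> x *\<^sub>R G x) = 0"
proof (cases "inj_on G T")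
  case False
  then obtain x y where xy: "x \<in> T" "y \<in> T" "x \<noteq> y" "G x = G y"
    unfolding inj_on_def by blast
  define \<gamma> where "\<gamma> z = (if z = x then 1 else if z = y then -1 else (0::real))" for z
  have "(\<Sum>z\<in>T. \<gamma> z *\<^sub>R G z) = (\<Sum>z\<in>{x,y}. \<gamma> z *\<^sub>R G z)"
    using T xy by (intro sum.mono_neutral_right) (auto simp: \<gamma>_def)
  also have "\<dots> = 0" using xy by (simp add: \<gamma>_def)
  finally show ?thesis using xy by (intro that[of \<gamma>]) (auto simp: \<gamma>_def)
next
  case True
  then have "dependent (G ` T)"
    using card independent_bound[of "G ` T"] by (force simp: card_image)
  then obtain t u where tu: "finite t" "t \<subseteq> G ` T" "\<exists>v\<in>t. u v \<noteq> 0" "(\<Sum>v\<in>t. u v *\<^sub>R v) = 0"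
    unfolding dependent_explicit by blast
  define \<gamma> where "\<gamma> x = (if G x \<in> t then u (G x) else 0)" for x
  have "(\<Sum>x\<in>T. \<gamma> x *\<^sub>R G x) = (\<Sum>v\<in>G ` T. (if v \<in> t then u v else 0) *\<^sub>R v)"
    using True by (simp add: sum.reindex \<gamma>_def)
  also have "\<dots> = 0"
    using tu T by (subst sum.mono_neutral_cong_right[of "G ` T" t]) auto
  finally have "(\<Sum>x\<in>T. \<gamma> x *\<^sub>R G x) = 0" .
  moreover obtain x where "x \<in> T" "\<gamma> x \<noteq> 0" using tu by (auto simp: \<gamma>_def)
  ultimately show ?thesis using that by blast
qed

lemma ratio_test:
  fixes \<alpha> \<delta> :: "'a \<Rightarrow> real"
  assumes T: "finite T" and \<alpha>: "\<forall>x\<in>T. 0 \<le> \<alpha> x" and \<delta>: "\<exists>x\<in>T. \<delta> x < 0"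
  obtains s x\<^sub>0 where "0 \<le> s" "x\<^sub>0 \<in> T" "\<forall>x\<in>T. 0 \<le> \<alpha> x + s * \<delta> x" "\<alpha> x\<^sub>0 + s * \<delta> x\<^sub>0 = 0"
proof -
  define N where "N = {x\<in>T. \<delta> x < 0}"
  define ratio where "ratio x = \<alpha> x / - \<delta> x" for x
  have "finite N" "N \<noteq> {}" using T \<delta> by (auto simp: N_def)
  then have "Min (ratio ` N) \<in> ratio ` N" by (intro Min_in) auto
  then obtain x\<^sub>0 where x\<^sub>0: "x\<^sub>0 \<in> N" "ratio x\<^sub>0 = Min (ratio ` N)" by auto
  have min: "ratio x\<^sub>0 \<le> ratio x" if "x \<in> N" for x
    using x\<^sub>0 that \<open>finite N\<close> by simp
  show ?thesis
  proof (rule that[of "ratio x\<^sub>0" x\<^sub>0])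
    show "0 \<le> ratio x\<^sub>0" "x\<^sub>0 \<in> T" "\<alpha> x\<^sub>0 + ratio x\<^sub>0 * \<delta> x\<^sub>0 = 0"
      using x\<^sub>0(1) \<alpha> by (auto simp: N_def ratio_def intro: divide_nonneg_neg)
    show "\<forall>x\<in>T. 0 \<le> \<alpha> x + ratio x\<^sub>0 * \<delta> x"
    proof
      fix x assume x: "x \<in> T"
      show "0 \<le> \<alpha> x + ratio x\<^sub>0 * \<delta> x"
      proof (cases "\<delta> x < 0")
        case True
        then have "ratio x\<^sub>0 \<le> \<alpha> x / - \<delta> x" using min x by (simp add: N_def ratio_def)
        then have "ratio x\<^sub>0 * - \<delta> x \<le> \<alpha> x"
          using True by (subst (asm) pos_le_divide_eq) auto
        then show ?thesis by simp
      next
        case False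
        with x \<alpha> \<open>0 \<le> ratio x\<^sub>0\<close> show ?thesis by simp
      qed
    qed
  qed
qed

text \<open>The cone spanned by the \<open>G x\<close> lies in the half-space \<open>e \<bullet> _ \<ge> 0\<close> and the objective
  \<open>k\<close> vanishes where \<open>G x\<close> lies on its boundary, so nonnegative linear relations among the
  \<open>G x\<close> carry zero objective and a maximising combination can be taken basic.\<close>
locale caratheodory_objective =
  fixes G :: "'a \<Rightarrow> 'v::euclidean_space" and k :: "'a \<Rightarrow> real" and e :: 'v
  assumes inner_nonneg: "0 \<le> inner e (G x)"
    and inner_zero_imp: "inner e (G x) = 0 \<Longrightarrow> k x = 0"
begin

lemma nonneg_relation_objective_eq_0:
  assumes T: "finite T" and \<gamma>: "\<forall>x\<in>T. 0 \<le> \<gamma> x" "(\<Sum>x\<in>T. \<gamma> x *\<^sub>R G x) = 0"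
  shows "(\<Sum>x\<in>T. \<gamma> x * k x) = 0"
proof -
  have "(\<Sum>x\<in>T. \<gamma> x * inner e (G x)) = inner e (\<Sum>x\<in>T. \<gamma> x *\<^sub>R G x)"
    by (simp add: inner_sum_right)
  then have "(\<Sum>x\<in>T. \<gamma> x * inner e (G x)) = 0" using \<gamma>(2) by simp
  then have "\<forall>x\<in>T. \<gamma> x * inner e (G x) = 0"
    by (subst (asm) sum_nonneg_eq_0_iff[OF T]) (use \<gamma>(1) inner_nonneg in auto)
  then have "\<forall>x\<in>T. \<gamma> x * k x = 0" by (auto dest: inner_zero_imp)
  then show ?thesis by (rule sum.neutral)
qed

lemma improving_relation:
  assumes T: "finite T" and card: "DIM('v) < card T"
  obtains \<delta> where "\<exists>x\<in>T. \<delta> x < 0" "(\<Sum>x\<in>T. \<delta> x *\<^sub>R G x) = 0" "0 \<le> (\<Sum>x\<in>T. \<delta> x * k x)"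
proof -
  obtain \<gamma> where \<gamma>: "\<exists>x\<in>T. \<gamma> x \<noteq> 0" "(\<Sum>x\<in>T. \<gamma> x *\<^sub>R G x) = 0"
    using obtain_linear_relation[OF T card] by blast
  text \<open>One of \<open>\<gamma>\<close> and \<open>-\<gamma>\<close> does not decrease the objective; if it has no negative
    entry, its negation has one and leaves the objective unchanged.\<close>
  obtain \<delta> where \<delta>: "\<exists>x\<in>T. \<delta> x \<noteq> 0" "(\<Sum>x\<in>T. \<delta> x *\<^sub>R G x) = 0" "0 \<le> (\<Sum>x\<in>T. \<delta> x * k x)"
  proof (cases "0 \<le> (\<Sum>x\<in>T. \<gamma> x * k x)")
    case True
    with \<gamma> show ?thesis using that by blast
  next
    case False
    with \<gamma> show ?thesis using that[of "\<lambda>x. - \<gamma> x"] by (simp add: sum_negf)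
  qed
  show ?thesis
  proof (cases "\<exists>x\<in>T. \<delta> x < 0")
    case True
    with \<delta> show ?thesis using that by blast
  next
    case False
    then have "(\<Sum>x\<in>T. \<delta> x * k x) = 0"
      using \<delta>(2) by (intro nonneg_relation_objective_eq_0[OF T]) auto
    with False \<delta> show ?thesis
      using that[of "\<lambda>x. - \<delta> x"] by (force simp: sum_negf)
  qed
qed

lemma reduce_support:
  assumes "finite T" "\<forall>x\<in>T. 0 \<le> \<alpha> x" "(\<Sum>x\<in>T. \<alpha> x *\<^sub>R G x) = g"
  obtains S \<beta> where "S \<subseteq> T" "card S \<le> DIM('v)" "\<forall>x\<in>S. 0 \<le> \<beta> x"
    "(\<Sum>x\<in>S. \<beta> x *\<^sub>R G x) = g" "(\<Sum>x\<in>T. \<alpha> x * k x) \<le> (\<Sum>x\<in>S. \<beta> x * k x)"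
  using assms
proof (induction "card T" arbitrary: T \<alpha> rule: less_induct)
  case less
  note T = less.prems(2) and \<alpha> = less.prems(3) and sum_G = less.prems(4)
  show ?case
  proof (cases "card T \<le> DIM('v)")
    case True
    then show ?thesis using less.prems by blast
  next
    case False
    then obtain \<delta> where \<delta>: "\<exists>x\<in>T. \<delta> x < 0" "(\<Sum>x\<in>T. \<delta> x *\<^sub>R G x) = 0" "0 \<le> (\<Sum>x\<in>T. \<delta> x * k x)"
      using improving_relation[OF T] by (metis not_le)
    obtain s x\<^sub>0 where s: "0 \<le> s" "x\<^sub>0 \<in> T" "\<forall>x\<in>T. 0 \<le> \<alpha> x + s * \<delta> x" "\<alpha> x\<^sub>0 + s * \<delta> x\<^sub>0 = 0"
      using ratio_test[OF T \<alpha> \<delta>(1)] by blast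
    define \<alpha>' where "\<alpha>' x = \<alpha> x + s * \<delta> x" for x
    let ?T' = "T - {x\<^sub>0}"
    have "(\<Sum>x\<in>T. \<alpha>' x *\<^sub>R G x) = g + s *\<^sub>R (\<Sum>x\<in>T. \<delta> x *\<^sub>R G x)"
      using sum_G by (simp add: \<alpha>'_def scaleR_add_left sum.distrib scaleR_sum_right)
    then have sum_G': "(\<Sum>x\<in>?T'. \<alpha>' x *\<^sub>R G x) = g"
      using \<delta>(2) s(4) sum.remove[OF T s(2), of "\<lambda>x. \<alpha>' x *\<^sub>R G x"] by (simp add: \<alpha>'_def)
    have "(\<Sum>x\<in>T. \<alpha>' x * k x) = (\<Sum>x\<in>T. \<alpha> x * k x) + s * (\<Sum>x\<in>T. \<delta> x * k x)"
      by (simp add: \<alpha>'_def distrib_right sum.distrib sum_distrib_left mult.assoc)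
    then have objective': "(\<Sum>x\<in>T. \<alpha> x * k x) \<le> (\<Sum>x\<in>?T'. \<alpha>' x * k x)"
      using mult_nonneg_nonneg[OF s(1) \<delta>(3)] s(4) sum.remove[OF T s(2), of "\<lambda>x. \<alpha>' x * k x"]
      by (simp add: \<alpha>'_def)
    have "card ?T' < card T" using T s(2) by (rule card_Diff1_less)
    then show ?thesis
    proof (rule less.hyps)
      fix S \<beta>
      assume "S \<subseteq> ?T'" "card S \<le> DIM('v)" "\<forall>x\<in>S. 0 \<le> \<beta> x" "(\<Sum>x\<in>S. \<beta> x *\<^sub>R G x) = g"
        "(\<Sum>x\<in>?T'. \<alpha>' x * k x) \<le> (\<Sum>x\<in>S. \<beta> x * k x)"
      with objective' show thesis using less.prems(1)[of S \<beta>] by auto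
    qed (use T s(3) sum_G' in \<open>auto simp: \<alpha>'_def\<close>)
  qed
qed

end

section \<open>Reduction to finitely many atoms\<close>

lemma integrable_Pair:
  fixes f :: "'a \<Rightarrow> 'b::{banach,second_countable_topology}"
    and g :: "'a \<Rightarrow> 'c::{banach,second_countable_topology}"
  assumes "integrable M f" "integrable M g"
  shows "integrable M (\<lambda>x. (f x, g x))"
proof -
  have left: "bounded_linear (\<lambda>v::'b. (v, 0::'c))" and right: "bounded_linear (\<lambda>v::'c. (0::'b, v))"
    by (auto intro: bounded_linear_Pair bounded_linear_ident bounded_linear_zero)
  have "integrable M (\<lambda>x. (f x, 0::'c) + (0::'b, g x))"
    by (intro Bochner_Integration.integrable_add integrable_bounded_linear[OF left]
        integrable_bounded_linear[OF right] assms)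
  then show ?thesis by simp
qed

lemma integral_Pair:
  fixes f :: "'a \<Rightarrow> 'b::{banach,second_countable_topology}"
    and g :: "'a \<Rightarrow> 'c::{banach,second_countable_topology}"
  assumes "integrable M f" "integrable M g"
  shows "(\<integral>x. (f x, g x) \<partial>M) = (integral\<^sup>L M f, integral\<^sup>L M g)"
  using integral_fst[OF integrable_Pair[OF assms]] integral_snd[OF integrable_Pair[OF assms]]
  by (simp add: prod_eq_iff)

lemma obtain_indexed_combination:
  assumes S: "finite S" "card S \<le> Suc N" and \<beta>: "\<forall>x\<in>S. 0 \<le> \<beta> x"
  obtains alpha :: "nat \<Rightarrow> real" and m where "\<forall>i\<in>{0..N}. 0 \<le> alpha i"
    "\<And>F :: 'a \<Rightarrow> 'b::real_vector. (\<Sum>i\<in>{0..N}. alpha i *\<^sub>R F (m i)) = (\<Sum>x\<in>S. \<beta> x *\<^sub>R F x)"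
proof -
  obtain m where m: "bij_betw m {0..<card S} S" using ex_bij_betw_nat_finite[OF S(1)] by blast
  define alpha where "alpha i = (if i < card S then \<beta> (m i) else 0)" for i
  show ?thesis
  proof (rule that[of alpha m])
    show "\<forall>i\<in>{0..N}. 0 \<le> alpha i" using \<beta> m by (auto simp: alpha_def bij_betw_def)
    fix F :: "'a \<Rightarrow> 'b"
    have "(\<Sum>i\<in>{0..N}. alpha i *\<^sub>R F (m i)) = (\<Sum>i\<in>{0..<card S}. \<beta> (m i) *\<^sub>R F (m i))"
      using S(2) by (intro sum.mono_neutral_cong_right) (auto simp: alpha_def)
    also have "\<dots> = (\<Sum>x\<in>S. \<beta> x *\<^sub>R F x)"
      using sum.reindex_bij_betw[OF m, of "\<lambda>x. \<beta> x *\<^sub>R F x"] by simp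
    finally show "(\<Sum>i\<in>{0..N}. alpha i *\<^sub>R F (m i)) = (\<Sum>x\<in>S. \<beta> x *\<^sub>R F x)" .
  qed
qed

definition mixture_constraints ::
    "nat \<Rightarrow> ('a \<Rightarrow> 'v::real_vector) \<Rightarrow> ('a \<Rightarrow> real) \<Rightarrow> (nat \<Rightarrow> real) \<Rightarrow> 'v \<Rightarrow> (nat \<Rightarrow> 'a) \<Rightarrow> bool"
  where "mixture_constraints N Psi w alpha q m \<longleftrightarrow>
    (\<forall>i\<in>{0..N}. 0 \<le> alpha i) \<and> (\<Sum>i\<in>{0..N}. alpha i *\<^sub>R (Psi (m i) - q)) = 0 \<and>
    (\<Sum>i\<in>{0..N}. alpha i * w (m i)) = 1"

definition mixture_value ::
    "nat \<Rightarrow> ('a \<Rightarrow> 'v::real_vector) \<Rightarrow> 'v set \<Rightarrow> ('a \<Rightarrow> real) \<Rightarrow> ('a \<Rightarrow> real) \<Rightarrow> ereal"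
  where "mixture_value N Psi Z w Phi =
    (SUP (alpha, q, m) \<in> {(alpha, q, m). q \<in> Z \<and> mixture_constraints N Psi w alpha q m}.
       ereal (\<Sum>i\<in>{0..N}. alpha i * Phi (m i) * w (m i)))"

lemma reduce_to_mixture:
  fixes Psi :: "'a \<Rightarrow> 'v::euclidean_space"
  assumes T: "finite T" and \<alpha>: "\<forall>x\<in>T. 0 \<le> \<alpha> x"
    and Psi_sum: "(\<Sum>x\<in>T. \<alpha> x *\<^sub>R (Psi x - q)) = 0" and w_sum: "(\<Sum>x\<in>T. \<alpha> x * w x) = 1"
    and w: "\<And>x. 0 \<le> w x"
  obtains alpha m where "mixture_constraints DIM('v) Psi w alpha q m"
    "(\<Sum>x\<in>T. \<alpha> x * (Phi x * w x)) \<le> (\<Sum>i\<in>{0..DIM('v)}. alpha i * Phi (m i) * w (m i))"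
proof -
  define G where "G x = (Psi x - q, w x)" for x
  interpret caratheodory_objective G "\<lambda>x. Phi x * w x" "(0, 1)"
    by unfold_locales (simp_all add: G_def w)
  have "(\<Sum>x\<in>T. \<alpha> x *\<^sub>R G x) = (0, 1)"
    using Psi_sum w_sum by (simp add: G_def prod_eq_iff fst_sum snd_sum)
  then obtain S \<beta> where S: "S \<subseteq> T" "card S \<le> DIM('v \<times> real)" "\<forall>x\<in>S. 0 \<le> \<beta> x"
    "(\<Sum>x\<in>S. \<beta> x *\<^sub>R G x) = (0, 1)" "(\<Sum>x\<in>T. \<alpha> x * (Phi x * w x)) \<le> (\<Sum>x\<in>S. \<beta> x * (Phi x * w x))"
    by (rule reduce_support[OF T \<alpha>])
  have "card S \<le> Suc DIM('v)" using S(2) by simp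
  obtain alpha m where alpha: "\<forall>i\<in>{0..DIM('v)}. 0 \<le> alpha i" and
    sums_F: "\<And>F :: 'a \<Rightarrow> ('v \<times> real) \<times> real.
      (\<Sum>i\<in>{0..DIM('v)}. alpha i *\<^sub>R F (m i)) = (\<Sum>x\<in>S. \<beta> x *\<^sub>R F x)"
    using obtain_indexed_combination[OF finite_subset[OF S(1) T] \<open>card S \<le> Suc DIM('v)\<close> S(3),
        where 'b = "('v \<times> real) \<times> real"]
    by blast
  note sums = sums_F[of "\<lambda>x. (G x, Phi x * w x)"]
  show ?thesis
  proof (rule that[of alpha m])
    show "mixture_constraints DIM('v) Psi w alpha q m"
      using arg_cong[OF sums, of "fst \<circ> fst"] arg_cong[OF sums, of "snd \<circ> fst"] alpha
        arg_cong[OF S(4), of fst] arg_cong[OF S(4), of snd]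
      by (simp add: mixture_constraints_def fst_sum snd_sum G_def)
    show "(\<Sum>x\<in>T. \<alpha> x * (Phi x * w x)) \<le> (\<Sum>i\<in>{0..DIM('v)}. alpha i * Phi (m i) * w (m i))"
      using arg_cong[OF sums, of snd] S(5) by (simp add: snd_sum mult.assoc)
  qed
qed

lemma (in prob_space) integral_ratio_eq_finite_combination:
  fixes Psi :: "'a \<Rightarrow> 'v::euclidean_space"
  assumes Psi: "integrable M Psi" and w: "integrable M w" "0 < integral\<^sup>L M w"
    and k: "integrable M k"
  obtains T \<alpha> where "finite T" "\<forall>x\<in>T. 0 \<le> \<alpha> x"
    "(\<Sum>x\<in>T. \<alpha> x *\<^sub>R (Psi x - integral\<^sup>L M Psi)) = 0" "(\<Sum>x\<in>T. \<alpha> x * w x) = 1"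
    "integral\<^sup>L M k / integral\<^sup>L M w = (\<Sum>x\<in>T. \<alpha> x * k x)"
proof -
  define q where "q = integral\<^sup>L M Psi"
  define c where "c = integral\<^sup>L M w"
  define X where "X x = ((Psi x - q, w x), k x)" for x
  have Psi_q: "integrable M (\<lambda>x. Psi x - q)" using Psi by auto
  have X: "integrable M X" unfolding X_def by (intro integrable_Pair Psi_q w(1) k)
  have "(\<integral>x. (Psi x - q, w x) \<partial>M) = (0, c)"
    using integral_Pair[OF Psi_q w(1)] Psi prob_space by (simp add: q_def c_def)
  then have "integral\<^sup>L M X = ((0, c), integral\<^sup>L M k)"
    unfolding X_def using integral_Pair[OF integrable_Pair[OF Psi_q w(1)] k] by simp
  moreover obtain T u where T: "finite T" "\<forall>x\<in>T. 0 \<le> u x" and "sum u T = 1"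
      and "(\<Sum>x\<in>T. u x *\<^sub>R X x) = integral\<^sup>L M X"
    by (rule integral_eq_finite_convex_combination[OF X])
  ultimately have sum_u: "(\<Sum>x\<in>T. u x *\<^sub>R X x) = ((0, c), integral\<^sup>L M k)" by simp
  show ?thesis
  proof (rule that[of T "\<lambda>x. u x / c"])
    show "\<forall>x\<in>T. 0 \<le> u x / c" using T(2) w(2) by (simp add: c_def)
    have "(\<Sum>x\<in>T. (u x / c) *\<^sub>R X x) = (1 / c) *\<^sub>R (\<Sum>x\<in>T. u x *\<^sub>R X x)"
      by (simp add: scaleR_sum_right)
    also have "\<dots> = (1 / c) *\<^sub>R ((0, c), integral\<^sup>L M k)" by (simp only: sum_u)
    finally show "(\<Sum>x\<in>T. (u x / c) *\<^sub>R (Psi x - integral\<^sup>L M Psi)) = 0"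
      "(\<Sum>x\<in>T. u x / c * w x) = 1" "integral\<^sup>L M k / integral\<^sup>L M w = (\<Sum>x\<in>T. u x / c * k x)"
      using w(2) by (simp_all add: X_def prod_eq_iff fst_sum snd_sum q_def c_def)
  qed (use T in simp)
qed

lemma (in prob_space) integral_ratio_le_mixture:
  fixes Psi :: "'a \<Rightarrow> 'v::euclidean_space"
  assumes Psi: "integrable M Psi"
    and w: "integrable M w" "\<And>x. 0 \<le> w x" "0 < integral\<^sup>L M w"
    and k: "integrable M k" "\<And>x. k x \<le> Phi x * w x"
  obtains alpha m where "mixture_constraints DIM('v) Psi w alpha (integral\<^sup>L M Psi) m"
    "integral\<^sup>L M k / integral\<^sup>L M w \<le> (\<Sum>i\<in>{0..DIM('v)}. alpha i * Phi (m i) * w (m i))"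
proof -
  obtain T \<alpha> where T: "finite T" "\<forall>x\<in>T. 0 \<le> \<alpha> x"
    "(\<Sum>x\<in>T. \<alpha> x *\<^sub>R (Psi x - integral\<^sup>L M Psi)) = 0" "(\<Sum>x\<in>T. \<alpha> x * w x) = 1"
    and ratio: "integral\<^sup>L M k / integral\<^sup>L M w = (\<Sum>x\<in>T. \<alpha> x * k x)"
    by (rule integral_ratio_eq_finite_combination[OF Psi w(1,3) k(1)])
  obtain alpha m where mixture: "mixture_constraints DIM('v) Psi w alpha (integral\<^sup>L M Psi) m"
    and objective: "(\<Sum>x\<in>T. \<alpha> x * (Phi x * w x)) \<le> (\<Sum>i\<in>{0..DIM('v)}. alpha i * Phi (m i) * w (m i))"
    by (rule reduce_to_mixture[OF T w(2)])
  have "(\<Sum>x\<in>T. \<alpha> x * k x) \<le> (\<Sum>x\<in>T. \<alpha> x * (Phi x * w x))"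
    using T(2) k(2) by (intro sum_mono mult_left_mono) auto
  with ratio objective show ?thesis by (intro that[OF mixture]) linarith
qed

section \<open>The posterior problem\<close>

text \<open>The probability measure \<open>\<Sum>\<^sub>i (alpha i / \<Sum>\<^sub>j alpha j) \<delta>\<^bsub>m i\<^esub>\<close>, \<open>i = 0..N\<close>,
  on the Borel sets.\<close>
definition dirac_mixture :: "nat \<Rightarrow> (nat \<Rightarrow> real) \<Rightarrow> (nat \<Rightarrow> 'a::topological_space) \<Rightarrow> 'a measure"
  where "dirac_mixture N alpha m =
    distr (measure_pmf (pmf_of_list (map (\<lambda>i. (i, alpha i / (\<Sum>j\<in>{0..N}. alpha j))) [0..<Suc N])))
      borel m"

context
  fixes N :: nat and alpha :: "nat \<Rightarrow> real"
  assumes alpha_nonneg: "\<forall>i\<in>{0..N}. 0 \<le> alpha i" and alpha_sum_pos: "0 < (\<Sum>i\<in>{0..N}. alpha i)"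
begin

lemma normalized_weights_pmf:
  defines "P \<equiv> pmf_of_list (map (\<lambda>i. (i, alpha i / (\<Sum>j\<in>{0..N}. alpha j))) [0..<Suc N])"
  shows "set_pmf P \<subseteq> {0..N}" and "i \<in> {0..N} \<Longrightarrow> pmf P i = alpha i / (\<Sum>j\<in>{0..N}. alpha j)"
proof -
  define S where "S = (\<Sum>j\<in>{0..N}. alpha j)"
  define xs where "xs = map (\<lambda>i. (i, alpha i / S)) [0..<Suc N]"
  have P: "P = pmf_of_list xs" by (simp add: P_def xs_def S_def)
  have upt: "{0..N} = {0..<Suc N}" by auto
  have wf: "pmf_of_list_wf xs"
  proof (rule pmf_of_list_wfI)
    show "x \<ge> 0" if "x \<in> set (map snd xs)" for x
      using that alpha_nonneg alpha_sum_pos by (auto simp: xs_def S_def)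
    have "sum_list (map snd xs) = (\<Sum>i\<in>{0..<Suc N}. alpha i / S)"
      by (simp add: xs_def o_def sum_set_upt_conv_sum_list_nat[symmetric])
    then show "sum_list (map snd xs) = 1"
      using alpha_sum_pos by (simp add: sum_divide_distrib[symmetric] S_def upt)
  qed
  show "set_pmf P \<subseteq> {0..N}" using set_pmf_of_list[OF wf] by (auto simp: P xs_def)
  assume i: "i \<in> {0..N}"
  have "pmf P i = sum_list (map (\<lambda>z. if fst z = i then snd z else 0) xs)"
    unfolding P pmf_pmf_of_list[OF wf] by (simp add: sum_list_map_filter')
  also have "\<dots> = (\<Sum>j\<in>{0..<Suc N}. if j = i then alpha j / S else 0)"
    by (simp add: xs_def o_def sum_set_upt_conv_sum_list_nat[symmetric])
  finally show "pmf P i = alpha i / (\<Sum>j\<in>{0..N}. alpha j)" using i by (simp add: S_def)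
qed

lemma dirac_mixture_in_prob_algebra: "dirac_mixture N alpha m \<in> space (prob_algebra borel)"
  unfolding dirac_mixture_def space_prob_algebra
  by (auto intro!: prob_space.prob_space_distr prob_space_measure_pmf)

lemma
  fixes f :: "'a::topological_space \<Rightarrow> 'b::{banach,second_countable_topology}"
  assumes f: "f \<in> borel_measurable borel"
  shows integrable_dirac_mixture: "integrable (dirac_mixture N alpha m) f"
    and integral_dirac_mixture:
      "integral\<^sup>L (dirac_mixture N alpha m) f = (\<Sum>i\<in>{0..N}. (alpha i / (\<Sum>j\<in>{0..N}. alpha j)) *\<^sub>R f (m i))"
proof -
  define P where "P = pmf_of_list (map (\<lambda>i. (i, alpha i / (\<Sum>j\<in>{0..N}. alpha j))) [0..<Suc N])"
  have m: "m \<in> measurable (measure_pmf P) borel" by simp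
  have finite: "finite (set_pmf P)"
    using normalized_weights_pmf(1) finite_subset unfolding P_def by blast
  show "integrable (dirac_mixture N alpha m) f"
    unfolding dirac_mixture_def P_def[symmetric] integrable_distr_eq[OF m f]
    by (rule integrable_measure_pmf_finite[OF finite])
  have "integral\<^sup>L (dirac_mixture N alpha m) f = (\<integral>i. f (m i) \<partial>measure_pmf P)"
    unfolding dirac_mixture_def P_def[symmetric] by (rule integral_distr[OF m f])
  also have "\<dots> = (\<Sum>i\<in>{0..N}. pmf P i *\<^sub>R f (m i))"
    using normalized_weights_pmf(1) unfolding P_def by (intro integral_measure_pmf) auto
  finally show "integral\<^sup>L (dirac_mixture N alpha m) f
      = (\<Sum>i\<in>{0..N}. (alpha i / (\<Sum>j\<in>{0..N}. alpha j)) *\<^sub>R f (m i))"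
    using normalized_weights_pmf(2) unfolding P_def by simp
qed

end

lemma mixture_constraints_sum_pos:
  assumes "mixture_constraints N Psi w alpha q m"
  shows "0 < (\<Sum>i\<in>{0..N}. alpha i)"
proof -
  have alpha: "\<forall>i\<in>{0..N}. 0 \<le> alpha i" and w_sum: "(\<Sum>i\<in>{0..N}. alpha i * w (m i)) = 1"
    using assms by (auto simp: mixture_constraints_def)
  have "(\<Sum>i\<in>{0..N}. alpha i) \<noteq> 0"
  proof
    assume "(\<Sum>i\<in>{0..N}. alpha i) = 0"
    then have "\<forall>i\<in>{0..N}. alpha i = 0" using sum_nonneg_eq_0_iff[of "{0..N}" alpha] alpha by simp
    with w_sum show False by simp
  qed
  moreover have "0 \<le> (\<Sum>i\<in>{0..N}. alpha i)" using alpha by (intro sum_nonneg) auto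
  ultimately show ?thesis by simp
qed

lemma
  fixes Psi :: "'a::topological_space \<Rightarrow> 'v::{banach,second_countable_topology}"
  assumes Phi: "Phi \<in> borel_measurable borel" and Psi: "Psi \<in> borel_measurable borel"
    and w: "(\<lambda>mu. measure (D mu) B) \<in> borel_measurable borel"
    and q: "q \<in> Z" and constraints: "mixture_constraints N Psi (\<lambda>mu. measure (D mu) B) alpha q m"
  shows dirac_mixture_in_Pi_cond: "dirac_mixture N alpha m \<in> Pi_cond (PiZ Psi Z) D B"
    and post_exp_dirac_mixture: "post_exp (dirac_mixture N alpha m) D Phi B
      = ereal (\<Sum>i\<in>{0..N}. alpha i * Phi (m i) * measure (D (m i)) B)"
proof -
  have alpha: "\<forall>i\<in>{0..N}. 0 \<le> alpha i"
    and Psi_sum: "(\<Sum>i\<in>{0..N}. alpha i *\<^sub>R (Psi (m i) - q)) = 0"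
    and w_sum: "(\<Sum>i\<in>{0..N}. alpha i * measure (D (m i)) B) = 1"
    using constraints by (auto simp: mixture_constraints_def)
  define S where "S = (\<Sum>i\<in>{0..N}. alpha i)"
  define p where "p = dirac_mixture N alpha m"
  have S_pos: "0 < (\<Sum>i\<in>{0..N}. alpha i)" by (rule mixture_constraints_sum_pos[OF constraints])
  note integral_p = integral_dirac_mixture[OF alpha S_pos, where m = m, folded S_def p_def]
  have S: "0 < S" using S_pos by (simp add: S_def)
  have "(\<Sum>i\<in>{0..N}. alpha i *\<^sub>R Psi (m i)) = S *\<^sub>R q"
    using Psi_sum by (simp add: scaleR_diff_right sum_subtractf S_def scaleR_sum_left)
  moreover have "integral\<^sup>L p Psi = (1 / S) *\<^sub>R (\<Sum>i\<in>{0..N}. alpha i *\<^sub>R Psi (m i))"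
    using integral_p[OF Psi] by (simp add: scaleR_sum_right)
  ultimately have "integral\<^sup>L p Psi = q" using S by simp
  moreover have w_integral: "integral\<^sup>L p (\<lambda>mu. measure (D mu) B) = 1 / S"
    using integral_p[OF w] w_sum by (simp add: sum_divide_distrib[symmetric])
  ultimately show "dirac_mixture N alpha m \<in> Pi_cond (PiZ Psi Z) D B"
    using dirac_mixture_in_prob_algebra[OF alpha S_pos] integrable_dirac_mixture[OF alpha S_pos Psi] q S
    by (simp add: Pi_cond_def PiZ_def p_def)
  have h: "(\<lambda>mu. Phi mu * measure (D mu) B) \<in> borel_measurable borel" using Phi w by simp
  have "integral\<^sup>L p (\<lambda>mu. Phi mu * measure (D mu) B)
      = (\<Sum>i\<in>{0..N}. alpha i * Phi (m i) * measure (D (m i)) B) / S"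
    using integral_p[OF h] by (simp add: sum_divide_distrib mult.assoc)
  then show "post_exp (dirac_mixture N alpha m) D Phi B
      = ereal (\<Sum>i\<in>{0..N}. alpha i * Phi (m i) * measure (D (m i)) B)"
    using w_integral S ext_integral_eq_integral[OF integrable_dirac_mixture[OF alpha S_pos h]]
    by (simp add: post_exp_def p_def)
qed

lemma mixture_value_le_U_post:
  fixes Psi :: "'a::topological_space \<Rightarrow> 'v::{banach,second_countable_topology}"
  assumes Phi: "Phi \<in> borel_measurable borel" and Psi: "Psi \<in> borel_measurable borel"
    and w: "(\<lambda>mu. measure (D mu) B) \<in> borel_measurable borel"
  shows "mixture_value N Psi Z (\<lambda>mu. measure (D mu) B) Phi \<le> U_post (PiZ Psi Z) D Phi B"
  unfolding mixture_value_def
proof (rule SUP_least, clarify)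
  fix alpha q m
  assume feasible: "q \<in> Z" "mixture_constraints N Psi (\<lambda>mu. measure (D mu) B) alpha q m"
  have "post_exp (dirac_mixture N alpha m) D Phi B \<le> U_post (PiZ Psi Z) D Phi B"
    unfolding U_post_def by (rule SUP_upper[OF dirac_mixture_in_Pi_cond[OF Phi Psi w feasible]])
  then show "ereal (\<Sum>i\<in>{0..N}. alpha i * Phi (m i) * measure (D (m i)) B) \<le> U_post (PiZ Psi Z) D Phi B"
    by (simp only: post_exp_dirac_mixture[OF Phi Psi w feasible])
qed

lemma semibounded_mult_unit_interval:
  fixes f w :: "'a \<Rightarrow> real"
  assumes f: "bdd_above (range f) \<or> bdd_below (range f)" and w: "\<And>x. 0 \<le> w x" "\<And>x. w x \<le> 1"
  shows "bdd_above (range (\<lambda>x. f x * w x)) \<or> bdd_below (range (\<lambda>x. f x * w x))"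
proof -
  have between: "min 0 (f x) \<le> f x * w x \<and> f x * w x \<le> max 0 (f x)" for x
  proof (cases "0 \<le> f x")
    case True
    then show ?thesis using w[of x] by (simp add: mult_left_le)
  next
    case False
    then have "0 \<le> f x * (w x - 1)" using w[of x] by (intro mult_nonpos_nonpos) auto
    with False show ?thesis using w[of x] by (simp add: algebra_simps mult_nonpos_nonneg)
  qed
  from f show ?thesis
  proof
    assume "bdd_above (range f)"
    then obtain K where K: "\<And>x. f x \<le> K" by (auto simp: bdd_above_def)
    have "bdd_above (range (\<lambda>x. f x * w x))"
      by (intro bdd_aboveI2[where M = "max 0 K"]
          order_trans[OF conjunct2[OF between] max.mono[OF order_refl K]])
    then show ?thesis ..
  next
    assume "bdd_below (range f)"
    then obtain a where a: "\<And>x. a \<le> f x" by (auto simp: bdd_below_def)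
    have "bdd_below (range (\<lambda>x. f x * w x))"
      by (intro bdd_belowI2[where m = "min 0 a"]
          order_trans[OF min.mono[OF order_refl a] conjunct1[OF between]])
    then show ?thesis ..
  qed
qed

lemma U_post_le_mixture_value:
  fixes Psi :: "'a::topological_space \<Rightarrow> 'v::euclidean_space"
  assumes Phi: "Phi \<in> borel_measurable borel"
    and Phi_semibounded: "bdd_above (range Phi) \<or> bdd_below (range Phi)"
    and D: "\<And>mu. prob_space (D mu)" and w: "(\<lambda>mu. measure (D mu) B) \<in> borel_measurable borel"
  shows "U_post (PiZ Psi Z) D Phi B \<le> mixture_value DIM('v) Psi Z (\<lambda>mu. measure (D mu) B) Phi"
    (is "_ \<le> ?R")
  unfolding U_post_def
proof (rule SUP_least)
  fix p assume "p \<in> Pi_cond (PiZ Psi Z) D B"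
  then have p: "prob_space p" "sets p = sets borel" and Psi: "integrable p Psi"
    and Z: "integral\<^sup>L p Psi \<in> Z" and w_pos: "0 < (\<integral>mu. measure (D mu) B \<partial>p)"
    by (auto simp: Pi_cond_def PiZ_def space_prob_algebra)
  interpret prob_space p by (rule p(1))
  have meas: "f \<in> borel_measurable p" if "f \<in> borel_measurable borel" for f :: "'a \<Rightarrow> real"
    using that by (simp add: measurable_cong_sets[OF p(2) refl])
  have w_bounds: "0 \<le> measure (D mu) B" "measure (D mu) B \<le> 1" for mu
    using prob_space.prob_le_1[OF D] by auto
  have w_int: "integrable p (\<lambda>mu. measure (D mu) B)"
    using w_bounds by (intro integrable_const_bound[where B=1] meas w) auto
  have minorant: "ereal (integral\<^sup>L p k) \<le> ereal (\<integral>mu. measure (D mu) B \<partial>p) * ?R"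
    if k: "k \<in> {k. integrable p k \<and> (\<forall>x. k x \<le> Phi x * measure (D x) B)}" for k
  proof -
    obtain alpha m where
      "mixture_constraints DIM('v) Psi (\<lambda>mu. measure (D mu) B) alpha (integral\<^sup>L p Psi) m"
      "integral\<^sup>L p k / (\<integral>mu. measure (D mu) B \<partial>p)
         \<le> (\<Sum>i\<in>{0..DIM('v)}. alpha i * Phi (m i) * measure (D (m i)) B)"
      using integral_ratio_le_mixture[OF Psi w_int w_bounds(1) w_pos] k by blast
    then have "ereal (integral\<^sup>L p k / (\<integral>mu. measure (D mu) B \<partial>p)) \<le> ?R"
      unfolding mixture_value_def using Z by (force intro: SUP_upper2)
    then show ?thesis using w_pos by (simp add: ereal_divide_le_pos[symmetric])
  qed
  have "ext_integral p (\<lambda>x. Phi x * measure (D x) B) \<le> ereal (\<integral>mu. measure (D mu) B \<partial>p) * ?R"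
    using ext_integral_le_SUP_integrable_minorants[OF meas[OF borel_measurable_times[OF Phi w]]
        semibounded_mult_unit_interval[OF Phi_semibounded w_bounds]]
    by (rule order_trans) (rule SUP_least[OF minorant])
  then show "post_exp p D Phi B \<le> ?R"
    using w_pos by (simp add: post_exp_def ereal_divide_le_pos)
qed

theorem theorem4p8:
  fixes f :: "'p::polish_space \<Rightarrow> 'a::t2_space"
    and g :: "'q::polish_space \<Rightarrow> 'd::topological_space"
    and Phi :: "'a \<Rightarrow> real"
    and Psi :: "'a \<Rightarrow> real ^ 'n"
    and Z :: "(real ^ 'n) set"
    and D :: "'a \<Rightarrow> 'd measure"
    and B :: "'d set"
  assumes A_suslin: "continuous_on UNIV f" "surj f"
    and Phi_meas: "Phi \<in> borel_measurable borel"
    and Phi_semibounded: "bdd_above (range Phi) \<or> bdd_below (range Phi)"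
    and Psi_meas: "Psi \<in> borel_measurable borel"
    and D_metrizable: "metrizable_space (euclidean :: 'd topology)"
    and D_suslin: "continuous_on UNIV g" "surj g"
    and D_meas: "D \<in> measurable borel (prob_algebra borel)"
    and B_open: "open B"
  shows "U_post (PiZ Psi Z) D Phi B =
    (SUP (alpha, q, m) \<in> {(alpha :: nat \<Rightarrow> real, q, m :: nat \<Rightarrow> 'a).
         (\<forall>i\<in>{0..CARD('n)}. alpha i \<ge> 0) \<and> q \<in> Z \<and>
         (\<Sum>i\<in>{0..CARD('n)}. alpha i *\<^sub>R (Psi (m i) - q)) = 0 \<and>
         (\<Sum>i\<in>{0..CARD('n)}. alpha i * measure (D (m i)) B) = 1}.
       ereal (\<Sum>i\<in>{0..CARD('n)}. alpha i * Phi (m i) * measure (D (m i)) B))"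
    (is "_ = ?rhs")
proof -
  have D: "prob_space (D mu)" for mu
    using measurable_space[OF D_meas, of mu] by (simp add: space_prob_algebra)
  have w: "(\<lambda>mu. measure (D mu) B) \<in> borel_measurable borel"
    using D_meas B_open by measurable
  have "U_post (PiZ Psi Z) D Phi B = mixture_value CARD('n) Psi Z (\<lambda>mu. measure (D mu) B) Phi"
    using mixture_value_le_U_post[OF Phi_meas Psi_meas w]
      U_post_le_mixture_value[OF Phi_meas Phi_semibounded D w, of Psi Z]
    by (intro antisym) simp_all
  also have "\<dots> = ?rhs"
    unfolding mixture_value_def mixture_constraints_def by (intro SUP_cong) auto
  finally show ?thesis .
qed

end
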